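(* Let $\alpha\in(0,1)$, $a,b\in\mathbb{R}$, $\tau>0$, and $Q(s)=s^\alpha-a-b e^{-s\tau}$ (principal branch of $s^\alpha$, defined for $s\in\mathbb{C}\setminus(-\infty,0]$). For any real numbers $\rho_1\le\rho_2$, the equation $Q(s)=0$ has at most finitely many roots in the vertical strip $\{z\in\mathbb{C}:\rho_1\le \operatorname{Re}z\le\rho_2\}$.
   Context: $s^\alpha=|s|^\alpha e^{i\alpha\arg s}$ with $\arg s\in(-\pi,\pi)$. *)

theory Defs
  imports "HOL-Analysis.Analysis"
begin

text \<open>Principal branch s^alpha = |s|^alpha e^{i alpha arg s}, arg s in (-pi,pi),
  defined on the slit plane C minus (-inf,0]. Library: powr uses principal Ln.\<close>
definition slit_plane :: "complex set" where
  "slit_plane = - {z. Im z = 0 \<and> Re z \<le> 0}"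

definition Qfun :: "real \<Rightarrow> real \<Rightarrow> real \<Rightarrow> real \<Rightarrow> complex \<Rightarrow> complex" where
  "Qfun \<alpha> a b \<tau> s = s powr (complex_of_real \<alpha>) - complex_of_real a
      - complex_of_real b * exp (- s * complex_of_real \<tau>)"

end

theory Submission
  imports Defs "HOL-Complex_Analysis.Complex_Analysis"
begin

text \<open>
  Zeros of Q in the strip are bounded, since there |s|^\<alpha> \<le> |a| + |b| exp(-\<rho>1 \<tau>).
  They also stay away from 0: near 0 the term b (exp(-s \<tau>) - 1) is O(|s|), whereas
  |s^\<alpha> - (a + b)| is not, because \<alpha> < 1. As Q commutes with conjugation, it suffices
  to count zeros in the closed upper half plane. There s^\<alpha> = exp(i \<alpha> \<pi>/2) (-i s)^\<alpha>,
  a branch that is holomorphic across the negative real axis, so these zeros are zeros of a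
  non-constant holomorphic function in a compact subset of its domain, hence finitely many.
\<close>

lemma eventually_linear_less_powr:
  fixes \<alpha> c :: real
  assumes "\<alpha> < 1"
  shows "eventually (\<lambda>x. c * x < x powr \<alpha>) (at_right 0)"
proof -
  have pos: "eventually (\<lambda>x. 0 < x) (at_right (0::real))"
    by (simp add: eventually_at_right_less)
  have "((\<lambda>x. \<bar>c\<bar> * x powr (1 - \<alpha>)) \<longlongrightarrow> \<bar>c\<bar> * 0) (at_right 0)"
    using assms by (intro tendsto_intros tendsto_zero_powrI eventually_mono[OF pos]) auto
  then have "eventually (\<lambda>x. \<bar>c\<bar> * x powr (1 - \<alpha>) < 1) (at_right 0)"
    by (simp add: order_tendstoD(2))
  with pos show ?thesis
  proof eventually_elim
    case (elim x)
    have "c * x \<le> \<bar>c\<bar> * x powr (1 - \<alpha>) * x powr \<alpha>"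
      using elim by (simp add: mult.assoc powr_add[symmetric])
    also have "\<dots> < x powr \<alpha>"
      using elim by simp
    finally show ?case .
  qed
qed

lemma eventually_linear_less_powr_dist:
  fixes \<alpha> c d :: real
  assumes "0 < \<alpha>" "\<alpha> < 1"
  shows "eventually (\<lambda>x. c * x < \<bar>x powr \<alpha> - d\<bar>) (at_right 0)"
proof (cases "d = 0")
  case True
  then show ?thesis
    using eventually_linear_less_powr[OF assms(2)] by (auto elim: eventually_mono)
next
  case False
  have "((\<lambda>x. x powr \<alpha>) \<longlongrightarrow> 0) (at_right 0)"
    using assms eventually_at_right_less[of "0::real"]
    by (intro tendsto_zero_powrI) (auto elim: eventually_mono)
  then have "((\<lambda>x. \<bar>x powr \<alpha> - d\<bar> - c * x) \<longlongrightarrow> \<bar>0 - d\<bar> - c * 0) (at_right 0)"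
    by (intro tendsto_intros)
  then have "eventually (\<lambda>x. 0 < \<bar>x powr \<alpha> - d\<bar> - c * x) (at_right 0)"
    using False by (intro order_tendstoD(1)) auto
  then show ?thesis
    by (auto elim: eventually_mono)
qed

lemma open_rotated_slit_plane: "open {s::complex. c * s \<notin> \<real>\<^sub>\<le>\<^sub>0}"
  by (intro open_Collect_neg continuous_closed_vimage[unfolded vimage_def] continuous_intros) simp

lemma connected_rotated_slit_plane:
  assumes "c \<noteq> 0"
  shows "connected {s::complex. c * s \<notin> \<real>\<^sub>\<le>\<^sub>0}"
proof -
  have "complex_of_real ` {..0} = \<real>\<^sub>\<le>\<^sub>0"
    by (auto simp: complex_nonpos_Reals_iff image_iff complex_eq_iff)
  then have "connected (- \<real>\<^sub>\<le>\<^sub>0 :: complex set)"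
    using starlike_imp_connected[OF starlike_slotted_complex_plane_left[of 0]] by simp
  then have "connected ((\<lambda>w. w / c) ` (- \<real>\<^sub>\<le>\<^sub>0))"
    using assms by (intro connected_continuous_image continuous_intros) auto
  also have "(\<lambda>w. w / c) ` (- \<real>\<^sub>\<le>\<^sub>0) = {s. c * s \<notin> \<real>\<^sub>\<le>\<^sub>0}"
    using assms by (auto simp: image_iff field_simps intro!: bexI[where x = "c * _"])
  finally show ?thesis .
qed

lemma Ln_upper_half_plane:
  assumes "s \<noteq> 0" "0 \<le> Im s"
  shows "Ln s = Ln (- \<i> * s) + \<i> * pi / 2"
proof (rule Ln_unique)
  have nz: "- \<i> * s \<noteq> 0" using assms by auto
  have "exp (\<i> * complex_of_real pi / 2) = \<i>"
    by (simp add: complex_eq_iff Re_exp Im_exp)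
  then show "exp (Ln (- \<i> * s) + \<i> * pi / 2) = s"
    using nz by (simp add: exp_add mult.commute mult.left_commute)
  have "\<bar>Im (Ln (- \<i> * s))\<bar> \<le> pi / 2"
    using Re_Ln_pos_le[OF nz] assms by simp
  then have "- (pi / 2) \<le> Im (Ln (- \<i> * s))" "Im (Ln (- \<i> * s)) \<le> pi / 2"
    by (simp_all add: abs_le_iff)
  moreover have "Im (Ln (- \<i> * s) + \<i> * pi / 2) = Im (Ln (- \<i> * s)) + pi / 2"
    by simp
  ultimately show "- pi < Im (Ln (- \<i> * s) + \<i> * pi / 2)" "Im (Ln (- \<i> * s) + \<i> * pi / 2) \<le> pi"
    using pi_gt_zero by linarith+
qed

lemma powr_upper_half_plane:
  assumes "0 \<le> Im s"
  shows "s powr w = exp (\<i> * w * pi / 2) * (- \<i> * s) powr w"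
  using Ln_upper_half_plane[OF _ assms]
  by (simp add: powr_def exp_add[symmetric] algebra_simps)

lemma Qfun_zeros_bounded_away_from_zero:
  fixes \<alpha> a b \<tau> :: real
  assumes "0 < \<alpha>" "\<alpha> < 1" "0 < \<tau>"
  obtains r where "0 < r" "\<And>s. s \<in> slit_plane \<Longrightarrow> Qfun \<alpha> a b \<tau> s = 0 \<Longrightarrow> r \<le> norm s"
proof -
  define c where "c = 3 / 2 * \<bar>b\<bar> * \<tau>"
  obtain r0 where "0 < r0" and r0: "\<And>x. 0 < x \<Longrightarrow> x < r0 \<Longrightarrow> c * x < \<bar>x powr \<alpha> - \<bar>a + b\<bar>\<bar>"
    using eventually_linear_less_powr_dist[OF assms(1,2), of c "\<bar>a + b\<bar>"]
    unfolding eventually_at_right_field by auto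
  define r where "r = min r0 (1 / (2 * \<tau>))"
  have "r \<le> norm s" if s: "s \<in> slit_plane" "Qfun \<alpha> a b \<tau> s = 0" for s
  proof (rule ccontr)
    assume "\<not> r \<le> norm s"
    then have "norm s < r0" "norm s < 1 / (2 * \<tau>)"
      by (auto simp: r_def)
    then have "norm s < r0" "norm s * \<tau> < 1 / 2"
      using assms(3) by (simp_all add: field_simps)
    then have small: "norm s < r0" "norm (- s * complex_of_real \<tau>) \<le> 1 / 2"
      using assms(3) by (simp_all add: norm_mult)
    have "0 < norm s"
      using s(1) by (auto simp: slit_plane_def)
    then have "c * norm s < \<bar>norm (s powr complex_of_real \<alpha>) - norm (complex_of_real (a + b))\<bar>"
      using r0 small(1) by (simp add: norm_powr_real_powr' del: of_real_add)
    also have "\<dots> \<le> norm (s powr complex_of_real \<alpha> - complex_of_real (a + b))"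
      by (rule norm_triangle_ineq3)
    also have "s powr complex_of_real \<alpha> - complex_of_real (a + b)
        = complex_of_real b * (exp (- s * complex_of_real \<tau>) - 1)"
      using s(2) by (simp add: Qfun_def algebra_simps)
    also have "norm \<dots> \<le> \<bar>b\<bar> * (3 / 2 * norm (- s * complex_of_real \<tau>))"
      unfolding norm_mult[of "complex_of_real b"] norm_of_real
      by (intro mult_left_mono norm_exp_bounds(2) small(2)) simp
    also have "\<dots> = c * norm s"
      using assms(3) by (simp add: c_def norm_mult)
    finally show False by simp
  qed
  moreover have "0 < r"
    using \<open>0 < r0\<close> assms(3) by (simp add: r_def)
  ultimately show ?thesis
    using that by blast
qed

lemma Qfun_zero_norm_le:
  fixes \<alpha> a b \<tau> \<rho> :: real
  assumes "0 < \<alpha>" "0 < \<tau>" "\<rho> \<le> Re s" "Qfun \<alpha> a b \<tau> s = 0"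
  shows "norm s \<le> (\<bar>a\<bar> + \<bar>b\<bar> * exp (- \<rho> * \<tau>)) powr (1 / \<alpha>)"
proof -
  have "norm s powr \<alpha> = norm (s powr complex_of_real \<alpha>)"
    by (simp add: norm_powr_real_powr')
  also have "s powr complex_of_real \<alpha> = complex_of_real a + complex_of_real b * exp (- s * complex_of_real \<tau>)"
    using assms(4) by (simp add: Qfun_def algebra_simps)
  also have "norm \<dots> \<le> \<bar>a\<bar> + \<bar>b\<bar> * norm (exp (- s * complex_of_real \<tau>))"
    by (metis norm_triangle_ineq norm_of_real norm_mult)
  also have "\<dots> = \<bar>a\<bar> + \<bar>b\<bar> * exp (- Re s * \<tau>)"
    by simp
  also have "\<dots> \<le> \<bar>a\<bar> + \<bar>b\<bar> * exp (- \<rho> * \<tau>)"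
    using assms(2,3) by (auto intro!: mult_left_mono)
  finally have "(norm s powr \<alpha>) powr (1 / \<alpha>) \<le> (\<bar>a\<bar> + \<bar>b\<bar> * exp (- \<rho> * \<tau>)) powr (1 / \<alpha>)"
    using assms(1) by (intro powr_mono2) auto
  then show ?thesis
    using assms(1) by (simp add: powr_powr)
qed

lemma Qfun_cnj:
  assumes "s \<in> slit_plane"
  shows "Qfun \<alpha> a b \<tau> (cnj s) = cnj (Qfun \<alpha> a b \<tau> s)"
proof -
  have "cnj (s powr complex_of_real \<alpha>) = cnj s powr complex_of_real \<alpha>"
    using assms by (subst cnj_powr) (auto simp: slit_plane_def)
  then show ?thesis
    by (simp add: Qfun_def exp_cnj)
qed

lemma Qfun_of_real:
  assumes "0 \<le> x"
  shows "Qfun \<alpha> a b \<tau> (complex_of_real x) = complex_of_real (x powr \<alpha> - a - b * exp (- x * \<tau>))"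
proof -
  have "exp (- complex_of_real x * complex_of_real \<tau>) = complex_of_real (exp (- x * \<tau>))"
    by (metis exp_of_real of_real_minus of_real_mult)
  with assms show ?thesis
    by (simp add: Qfun_def powr_of_real)
qed

lemma powr_minus_exp_not_constant:
  fixes \<alpha> b \<tau> :: real
  assumes "0 < \<alpha>" "0 \<le> \<tau>"
  shows "\<not> (\<lambda>x. x powr \<alpha> - b * exp (- x * \<tau>)) constant_on {0<..}"
proof
  define x where "x = (2 * \<bar>b\<bar> + 2) powr (1 / \<alpha>)"
  have "0 < x" "x powr \<alpha> = 2 * \<bar>b\<bar> + 2"
    using assms(1) by (simp_all add: x_def powr_powr)
  assume "(\<lambda>x. x powr \<alpha> - b * exp (- x * \<tau>)) constant_on {0<..}"
  then have "x powr \<alpha> - b * exp (- x * \<tau>) = 1 powr \<alpha> - b * exp (- 1 * \<tau>)"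
    using \<open>0 < x\<close> unfolding constant_on_def by (metis greaterThan_iff zero_less_one)
  then have "2 * \<bar>b\<bar> + 1 = b * (exp (- x * \<tau>) - exp (- \<tau>))"
    using \<open>x powr \<alpha> = _\<close> by (simp add: algebra_simps)
  also have "\<dots> \<le> \<bar>b\<bar> * \<bar>exp (- x * \<tau>) - exp (- \<tau>)\<bar>"
    by (metis abs_ge_self abs_mult)
  also have "\<dots> \<le> \<bar>b\<bar> * 1"
  proof (intro mult_left_mono)
    have "0 < exp (- x * \<tau>)" "exp (- x * \<tau>) \<le> 1" "0 < exp (- \<tau>)" "exp (- \<tau>) \<le> 1"
      using assms(2) \<open>0 < x\<close> by simp_all
    then show "\<bar>exp (- x * \<tau>) - exp (- \<tau>)\<bar> \<le> 1"
      by linarith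
  qed simp
  finally show False by simp
qed

lemma finite_Qfun_zeros_upper_strip:
  fixes \<alpha> a b \<tau> \<rho>1 \<rho>2 :: real
  assumes "0 < \<alpha>" "\<alpha> < 1" "0 < \<tau>"
  shows "finite {s \<in> slit_plane. \<rho>1 \<le> Re s \<and> Re s \<le> \<rho>2 \<and> 0 \<le> Im s \<and> Qfun \<alpha> a b \<tau> s = 0}"
proof -
  obtain r where "0 < r" and r: "\<And>s. s \<in> slit_plane \<Longrightarrow> Qfun \<alpha> a b \<tau> s = 0 \<Longrightarrow> r \<le> norm s"
    using Qfun_zeros_bounded_away_from_zero[OF assms] by blast
  define R where "R = (\<bar>a\<bar> + \<bar>b\<bar> * exp (- \<rho>1 * \<tau>)) powr (1 / \<alpha>)"
  define K where "K = {s. \<rho>1 \<le> Re s \<and> Re s \<le> \<rho>2 \<and> 0 \<le> Im s \<and> r \<le> norm s \<and> norm s \<le> R}"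
  define D where "D = {s. - \<i> * s \<notin> \<real>\<^sub>\<le>\<^sub>0}"
  define G where
    "G s = exp (\<i> * \<alpha> * pi / 2) * (- \<i> * s) powr \<alpha> - a - b * exp (- s * \<tau>)" for s :: complex
  have QG: "Qfun \<alpha> a b \<tau> s = G s" if "0 \<le> Im s" for s
    using powr_upper_half_plane[OF that] by (simp add: Qfun_def G_def)
  have "compact K"
  proof -
    have "closed K"
      unfolding K_def by (intro closed_Collect_conj closed_Collect_le continuous_intros)
    moreover have "K \<subseteq> cball 0 R"
      by (auto simp: K_def)
    ultimately show ?thesis
      by (metis bounded_cball bounded_subset compact_eq_bounded_closed)
  qed
  moreover have "K \<subseteq> D"
    using \<open>0 < r\<close> by (auto simp: K_def D_def complex_nonpos_Reals_iff cmod_def)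
  moreover have "G holomorphic_on D"
    unfolding G_def D_def by (intro holomorphic_intros) auto
  moreover have "\<not> G constant_on D"
  proof
    assume "G constant_on D"
    then obtain y where y: "\<And>s. s \<in> D \<Longrightarrow> G s = y"
      by (auto simp: constant_on_def)
    have "x powr \<alpha> - b * exp (- x * \<tau>) = Re y + a" if "0 < x" for x :: real
    proof -
      have "complex_of_real x \<in> D"
        using that by (simp add: D_def complex_nonpos_Reals_iff)
      then have "Qfun \<alpha> a b \<tau> (complex_of_real x) = y"
        using QG y by simp
      then show ?thesis
        using that by (auto simp: Qfun_of_real)
    qed
    then show False
      using powr_minus_exp_not_constant[OF assms(1), of \<tau> b] assms(3)
      by (auto simp: constant_on_def)
  qed
  ultimately have "finite {s \<in> K. G s = 0}"
    using open_rotated_slit_plane[of "- \<i>"] connected_rotated_slit_plane[of "- \<i>"]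
    unfolding D_def[symmetric] by (intro holomorphic_compact_finite_zeros[of G D]) auto
  moreover have "{s \<in> slit_plane. \<rho>1 \<le> Re s \<and> Re s \<le> \<rho>2 \<and> 0 \<le> Im s \<and> Qfun \<alpha> a b \<tau> s = 0}
      \<subseteq> {s \<in> K. G s = 0}"
    using r Qfun_zero_norm_le[OF assms(1,3)] QG by (fastforce simp: K_def R_def)
  ultimately show ?thesis
    by (rule finite_subset[rotated])
qed

theorem lemma3p1:
  fixes \<alpha> a b \<tau> \<rho>1 \<rho>2 :: real
  assumes "0 < \<alpha>" "\<alpha> < 1" "0 < \<tau>" "\<rho>1 \<le> \<rho>2"
  shows "finite {s \<in> slit_plane. \<rho>1 \<le> Re s \<and> Re s \<le> \<rho>2 \<and> Qfun \<alpha> a b \<tau> s = 0}"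
proof -
  let ?U = "{s \<in> slit_plane. \<rho>1 \<le> Re s \<and> Re s \<le> \<rho>2 \<and> 0 \<le> Im s \<and> Qfun \<alpha> a b \<tau> s = 0}"
  have "{s \<in> slit_plane. \<rho>1 \<le> Re s \<and> Re s \<le> \<rho>2 \<and> Qfun \<alpha> a b \<tau> s = 0} \<subseteq> ?U \<union> cnj ` ?U"
  proof safe
    fix s assume s: "s \<in> slit_plane" "\<rho>1 \<le> Re s" "Re s \<le> \<rho>2" "Qfun \<alpha> a b \<tau> s = 0" "s \<notin> cnj ` ?U"
    have "cnj s \<in> slit_plane"
      using s(1) by (simp add: slit_plane_def)
    moreover have "Qfun \<alpha> a b \<tau> (cnj s) = 0"
      using s(1,4) by (simp add: Qfun_cnj)
    ultimately have "Im s < 0 \<Longrightarrow> s \<in> cnj ` ?U"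
      using s(2,3) by (intro image_eqI[of s cnj "cnj s"]) auto
    then show "0 \<le> Im s"
      using s(5) by linarith
  qed
  moreover have "finite ?U"
    by (rule finite_Qfun_zeros_upper_strip[OF assms(1-3)])
  ultimately show ?thesis
    by (meson finite_Un finite_imageI finite_subset)
qed

end
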